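(* Let $U\subset\mathbb{R}^3$ be open with coordinates $(p_1,p_2,p_3)$, let $\lambda_1,\lambda_2,\lambda_3$ be smooth real functions of one real variable, and let $f\colon U\to\mathbb{R}$ be smooth. For $\lambda\in\mathbb{R}$ define the $1$-form $$\alpha_\lambda=(\lambda-\lambda_2(p_2))(\lambda-\lambda_3(p_3))f_1dp_1+(\lambda-\lambda_1(p_1))(\lambda-\lambda_3(p_3))f_2dp_2+(\lambda-\lambda_1(p_1))(\lambda-\lambda_2(p_2))f_3dp_3 .$$ Then $\alpha_\lambda\wedge d\alpha_\lambda=0$ for all $\lambda\in\mathbb{R}$ if and only if $$(\lambda_2(p_2)-\lambda_3(p_3))f_1f_{23}+(\lambda_3(p_3)-\lambda_1(p_1))f_2f_{13}+(\lambda_1(p_1)-\lambda_2(p_2))f_3f_{12}=0\quad\text{on }U.$$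
   Context: $f_i=\partial f/\partial p_i$, $f_{ij}=\partial^2f/\partial p_i\partial p_j$; each $\lambda_i$ depends only on the coordinate $p_i$. *)

theory Defs
  imports "HOL-Analysis.Analysis"
begin

definition pd :: "3 \<Rightarrow> (real^3 \<Rightarrow> real) \<Rightarrow> real^3 \<Rightarrow> real" where
  "pd i g x = frechet_derivative g (at x) (axis i 1)"

fun Ck_on :: "nat \<Rightarrow> (real^3) set \<Rightarrow> (real^3 \<Rightarrow> real) \<Rightarrow> bool" where
  "Ck_on 0 U g = continuous_on U g"
| "Ck_on (Suc k) U g = (g differentiable_on U \<and> (\<forall>i. Ck_on k U (pd i g)))"

definition smooth_on :: "(real^3) set \<Rightarrow> (real^3 \<Rightarrow> real) \<Rightarrow> bool" where
  "smooth_on U g = (\<forall>k. Ck_on k U g)"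

fun Ck1 :: "nat \<Rightarrow> (real \<Rightarrow> real) \<Rightarrow> bool" where
  "Ck1 0 g = continuous_on UNIV g"
| "Ck1 (Suc k) g = (g differentiable_on UNIV \<and> Ck1 k (deriv g))"

definition smooth1 :: "(real \<Rightarrow> real) \<Rightarrow> bool" where
  "smooth1 g = (\<forall>k. Ck1 k g)"

text \<open>A 1-form a_1 dp_1 + a_2 dp_2 + a_3 dp_3 is given by its coefficient family a.
  The 3-form alpha wedge d alpha equals (wedge_d a) dp_1 wedge dp_2 wedge dp_3, where\<close>
definition wedge_d :: "(3 \<Rightarrow> real^3 \<Rightarrow> real) \<Rightarrow> real^3 \<Rightarrow> real" where
  "wedge_d a x =
     a 1 x * (pd 2 (a 3) x - pd 3 (a 2) x)
   + a 2 x * (pd 3 (a 1) x - pd 1 (a 3) x)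
   + a 3 x * (pd 1 (a 2) x - pd 2 (a 1) x)"

definition alpha :: "(3 \<Rightarrow> real \<Rightarrow> real) \<Rightarrow> (real^3 \<Rightarrow> real) \<Rightarrow> real \<Rightarrow> 3 \<Rightarrow> real^3 \<Rightarrow> real" where
  "alpha lam f l i p =
     (if i = 1 then (l - lam 2 (p$2)) * (l - lam 3 (p$3)) * pd 1 f p
      else if i = 2 then (l - lam 1 (p$1)) * (l - lam 3 (p$3)) * pd 2 f p
      else (l - lam 1 (p$1)) * (l - lam 2 (p$2)) * pd 3 f p)"

end

theory Submission
  imports Defs
begin

text \<open>Expanding the products in the coefficients of \<open>\<alpha>\<^sub>\<lambda>\<close> by the Leibniz rule, every term
  containing a derivative of some \<open>\<lambda>\<^sub>k\<close> cancels against its partner, and after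
  identifying the mixed partials of \<open>f\<close> (Schwarz) what remains is
  \<open>\<alpha>\<^sub>\<lambda> \<and> d\<alpha>\<^sub>\<lambda> = -(\<lambda>-\<lambda>\<^sub>1)(\<lambda>-\<lambda>\<^sub>2)(\<lambda>-\<lambda>\<^sub>3) E dp\<^sub>1 \<and> dp\<^sub>2 \<and> dp\<^sub>3\<close>, where \<open>E\<close> is the
  expression on the right. At each point the cubic factor vanishes for at most three
  values of \<open>\<lambda>\<close>, which gives the equivalence.\<close>

lemma pd_eq_derivative_axis: "(g has_derivative g') (at x) \<Longrightarrow> pd i g x = g' (axis i 1)"
  unfolding pd_def using frechet_derivative_at by metis

lemma has_real_derivative_along_axis:
  assumes "g differentiable at (a + s *\<^sub>R axis i 1)"
  shows "((\<lambda>t. g (a + t *\<^sub>R axis i 1)) has_real_derivative pd i g (a + s *\<^sub>R axis i 1)) (at s)"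
proof -
  let ?x = "a + s *\<^sub>R axis i 1"
  have g: "(g has_derivative frechet_derivative g (at ?x)) (at ?x)"
    using assms frechet_derivative_works by blast
  have line: "((\<lambda>t. a + t *\<^sub>R axis i (1::real)) has_derivative (\<lambda>t. t *\<^sub>R axis i 1)) (at s)"
    by (auto intro!: derivative_eq_intros)
  have "((\<lambda>t. g (a + t *\<^sub>R axis i 1)) has_derivative
          (\<lambda>t. frechet_derivative g (at ?x) (t *\<^sub>R axis i 1))) (at s)"
    using diff_chain_at[OF line g] by (simp add: o_def)
  moreover have "linear (frechet_derivative g (at ?x))"
    using g has_derivative_linear by blast
  ultimately have "((\<lambda>t. g (a + t *\<^sub>R axis i 1)) has_derivative (\<lambda>t. t * pd i g ?x)) (at s)"
    unfolding pd_def by (simp add: linear_scale mult.commute)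
  then show ?thesis
    unfolding has_field_derivative_def by (rule has_derivative_eq_rhs) (auto simp: mult.commute)
qed

lemma second_difference_mvt:
  fixes g :: "real^3 \<Rightarrow> real"
  assumes h: "0 < h"
    and g_diff: "\<And>x. x \<in> cball p (2 * h) \<Longrightarrow> g differentiable at x"
    and gi_diff: "\<And>x. x \<in> cball p (2 * h) \<Longrightarrow> pd i g differentiable at x"
  obtains \<xi> where "\<xi> \<in> ball p (2 * h)"
    and "g (p + h *\<^sub>R axis i 1 + h *\<^sub>R axis j 1) - g (p + h *\<^sub>R axis i 1)
           - g (p + h *\<^sub>R axis j 1) + g p = h\<^sup>2 * pd j (pd i g) \<xi>"
proof -
  let ?ei = "axis i (1::real)" and ?ej = "axis j (1::real)"
  have dist_le: "dist (p + s *\<^sub>R ?ei + t *\<^sub>R ?ej) p \<le> \<bar>s\<bar> + \<bar>t\<bar>" for s t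
    using norm_triangle_ineq[of "s *\<^sub>R ?ei" "t *\<^sub>R ?ej"] by (simp add: dist_norm add.assoc)
  have in_cball: "p + s *\<^sub>R ?ei + t *\<^sub>R ?ej \<in> cball p (2 * h)"
    if "0 \<le> s" "s \<le> h" "0 \<le> t" "t \<le> h" for s t
    using dist_le[of s t] that by (simp add: dist_commute)
  define u where "u s = g ((p + h *\<^sub>R ?ej) + s *\<^sub>R ?ei) - g (p + s *\<^sub>R ?ei)" for s
  have u_deriv: "DERIV u s :> pd i g ((p + h *\<^sub>R ?ej) + s *\<^sub>R ?ei) - pd i g (p + s *\<^sub>R ?ei)"
    if "0 \<le> s" "s \<le> h" for s
  proof -
    have "(p + h *\<^sub>R ?ej) + s *\<^sub>R ?ei \<in> cball p (2 * h)"
      using in_cball[of s h] that h by (simp add: add_ac)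
    moreover have "p + s *\<^sub>R ?ei \<in> cball p (2 * h)"
      using in_cball[of s 0] that h by simp
    ultimately show ?thesis
      unfolding u_def by (intro DERIV_diff has_real_derivative_along_axis g_diff)
  qed
  obtain s0 where s0: "0 < s0" "s0 < h" and u_mvt:
      "u h - u 0 = h * (pd i g ((p + h *\<^sub>R ?ej) + s0 *\<^sub>R ?ei) - pd i g (p + s0 *\<^sub>R ?ei))"
    using MVT2[OF h u_deriv] by auto
  define v where "v t = pd i g ((p + s0 *\<^sub>R ?ei) + t *\<^sub>R ?ej)" for t
  have v_deriv: "DERIV v t :> pd j (pd i g) ((p + s0 *\<^sub>R ?ei) + t *\<^sub>R ?ej)"
    if "0 \<le> t" "t \<le> h" for t
    unfolding v_def using in_cball[of s0 t] that s0
    by (intro has_real_derivative_along_axis gi_diff) simp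
  obtain t0 where t0: "0 < t0" "t0 < h" and v_mvt:
      "v h - v 0 = h * pd j (pd i g) ((p + s0 *\<^sub>R ?ei) + t0 *\<^sub>R ?ej)"
    using MVT2[OF h v_deriv] by auto
  show ?thesis
  proof
    show "p + s0 *\<^sub>R ?ei + t0 *\<^sub>R ?ej \<in> ball p (2 * h)"
      using dist_le[of s0 t0] s0 t0 by (simp add: dist_commute)
    have "pd i g ((p + h *\<^sub>R ?ej) + s0 *\<^sub>R ?ei) - pd i g (p + s0 *\<^sub>R ?ei) = v h - v 0"
      unfolding v_def by (simp add: add_ac)
    moreover have "g (p + h *\<^sub>R ?ei + h *\<^sub>R ?ej) - g (p + h *\<^sub>R ?ei) - g (p + h *\<^sub>R ?ej) + g p
        = u h - u 0"
      unfolding u_def by (simp add: add_ac)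
    ultimately show "g (p + h *\<^sub>R ?ei + h *\<^sub>R ?ej) - g (p + h *\<^sub>R ?ei) - g (p + h *\<^sub>R ?ej) + g p
        = h\<^sup>2 * pd j (pd i g) (p + s0 *\<^sub>R ?ei + t0 *\<^sub>R ?ej)"
      using u_mvt v_mvt by (simp add: power2_eq_square)
  qed
qed

text \<open>Both orders of differentiation compute the same second difference, so the two mixed
  partials take equal values at points arbitrarily close to \<open>p\<close>.\<close>

lemma pd_pd_commute:
  fixes g :: "real^3 \<Rightarrow> real"
  assumes "open U" "p \<in> U"
    and g_diff: "g differentiable_on U"
    and gi_diff: "pd i g differentiable_on U" and gj_diff: "pd j g differentiable_on U"
    and "continuous_on U (pd j (pd i g))" "continuous_on U (pd i (pd j g))"
  shows "pd j (pd i g) p = pd i (pd j g) p"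
proof (rule ccontr)
  let ?F = "pd j (pd i g)" and ?G = "pd i (pd j g)"
  assume "?F p \<noteq> ?G p"
  define e where "e = \<bar>?F p - ?G p\<bar> / 2"
  have "e > 0" using \<open>?F p \<noteq> ?G p\<close> by (simp add: e_def)
  have "isCont ?F p" "isCont ?G p"
    using assms(1,2,6,7) continuous_on_eq_continuous_at by blast+
  then obtain dF dG where "dF > 0" and dF: "\<And>x. dist x p < dF \<Longrightarrow> dist (?F x) (?F p) < e"
    and "dG > 0" and dG: "\<And>x. dist x p < dG \<Longrightarrow> dist (?G x) (?G p) < e"
    using \<open>e > 0\<close> unfolding continuous_at_eps_delta by metis
  obtain r where "r > 0" "ball p r \<subseteq> U"
    using assms(1,2) open_contains_ball by blast
  define h where "h = min (min dF dG) r / 4"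
  have "0 < h" using \<open>dF > 0\<close> \<open>dG > 0\<close> \<open>r > 0\<close> by (simp add: h_def)
  have "cball p (2 * h) \<subseteq> U"
    using \<open>ball p r \<subseteq> U\<close> \<open>r > 0\<close> unfolding h_def by (auto simp: subset_iff)
  then have diff_at: "g differentiable at x" "pd i g differentiable at x" "pd j g differentiable at x"
    if "x \<in> cball p (2 * h)" for x
    using assms(1) g_diff gi_diff gj_diff that by (auto simp: differentiable_on_eq_differentiable_at)
  have "2 * h < dF" "2 * h < dG"
    using \<open>dF > 0\<close> \<open>dG > 0\<close> \<open>r > 0\<close> by (simp_all add: h_def)
  then have close: "dist (?F x) (?F p) < e" "dist (?G x) (?G p) < e" if "x \<in> ball p (2 * h)" for x
    using that dF[of x] dG[of x] by (simp_all add: dist_commute)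
  obtain x where x: "x \<in> ball p (2 * h)"
    "g (p + h *\<^sub>R axis i 1 + h *\<^sub>R axis j 1) - g (p + h *\<^sub>R axis i 1) - g (p + h *\<^sub>R axis j 1) + g p
       = h\<^sup>2 * ?F x"
    using second_difference_mvt[OF \<open>0 < h\<close> diff_at(1) diff_at(2)] by blast
  obtain y where y: "y \<in> ball p (2 * h)"
    "g (p + h *\<^sub>R axis j 1 + h *\<^sub>R axis i 1) - g (p + h *\<^sub>R axis j 1) - g (p + h *\<^sub>R axis i 1) + g p
       = h\<^sup>2 * ?G y"
    using second_difference_mvt[OF \<open>0 < h\<close> diff_at(1) diff_at(3)] by blast
  have swap: "p + h *\<^sub>R axis j 1 + h *\<^sub>R axis i 1 = p + h *\<^sub>R axis i 1 + h *\<^sub>R axis j (1::real)"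
    by (simp add: add_ac)
  then have "h\<^sup>2 * ?F x = h\<^sup>2 * ?G y"
    using x(2) y(2) unfolding swap by linarith
  then have "?F x = ?G y" using \<open>0 < h\<close> by simp
  then have "\<bar>?F p - ?G p\<bar> < 2 * e"
    using close[OF x(1)] close[OF y(1)] by (simp add: dist_real_def)
  then show False by (simp add: e_def)
qed

lemma pd_triple_product:
  assumes "(u has_derivative u') (at x)" "(v has_derivative v') (at x)" "w differentiable at x"
  shows "pd i (\<lambda>q. u q * v q * w q) x
     = u' (axis i 1) * v x * w x + u x * v' (axis i 1) * w x + u x * v x * pd i w x"
proof -
  have "(w has_derivative frechet_derivative w (at x)) (at x)"
    using assms(3) frechet_derivative_works by blast
  then have "((\<lambda>q. u q * v q * w q) has_derivative
     (\<lambda>h. (u x * v x) * frechet_derivative w (at x) h + (u x * v' h + u' h * v x) * w x)) (at x)"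
    by (intro has_derivative_mult assms)
  from pd_eq_derivative_axis[OF this, of i] show ?thesis
    by (simp add: pd_def algebra_simps)
qed

lemma has_derivative_const_minus_comp_nth:
  fixes \<mu> :: "real \<Rightarrow> real"
  assumes "\<mu> differentiable at (p$k)"
  shows "((\<lambda>q::real^3. l - \<mu> (q$k)) has_derivative (\<lambda>h. - (deriv \<mu> (p$k) * h$k))) (at p)"
proof -
  have "(\<mu> has_derivative (\<lambda>t. deriv \<mu> (p$k) * t)) (at (p$k))"
    using assms DERIV_deriv_iff_real_differentiable has_field_derivative_def by blast
  from diff_chain_at[OF bounded_linear_imp_has_derivative[OF bounded_linear_vec_nth] this]
  have "((\<lambda>q::real^3. \<mu> (q$k)) has_derivative (\<lambda>h. deriv \<mu> (p$k) * h$k)) (at p)"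
    by (simp add: o_def)
  then show ?thesis
    using has_derivative_diff[OF has_derivative_const[of l]] by fastforce
qed

lemma wedge_d_alpha_factorization:
  fixes lam :: "3 \<Rightarrow> real \<Rightarrow> real" and f :: "real^3 \<Rightarrow> real"
  assumes lam_diff: "\<And>k x. lam k differentiable at x"
    and f_diff: "\<And>i. pd i f differentiable at p"
    and "pd 1 (pd 2 f) p = pd 2 (pd 1 f) p"
    and "pd 1 (pd 3 f) p = pd 3 (pd 1 f) p"
    and "pd 2 (pd 3 f) p = pd 3 (pd 2 f) p"
  shows "wedge_d (alpha lam f l) p =
     - ((l - lam 1 (p$1)) * (l - lam 2 (p$2)) * (l - lam 3 (p$3))) *
       ((lam 2 (p$2) - lam 3 (p$3)) * pd 1 f p * pd 3 (pd 2 f) p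
      + (lam 3 (p$3) - lam 1 (p$1)) * pd 2 f p * pd 3 (pd 1 f) p
      + (lam 1 (p$1) - lam 2 (p$2)) * pd 3 f p * pd 2 (pd 1 f) p)"
proof -
  have a1: "alpha lam f l 1 = (\<lambda>q. (l - lam 2 (q$2)) * (l - lam 3 (q$3)) * pd 1 f q)"
   and a2: "alpha lam f l 2 = (\<lambda>q. (l - lam 1 (q$1)) * (l - lam 3 (q$3)) * pd 2 f q)"
   and a3: "alpha lam f l 3 = (\<lambda>q. (l - lam 1 (q$1)) * (l - lam 2 (q$2)) * pd 3 f q)"
    by (simp_all add: alpha_def fun_eq_iff)
  have c: "((\<lambda>q. l - lam k (q$k)) has_derivative (\<lambda>h. - (deriv (lam k) (p$k) * h$k))) (at p)"
    for k
    by (rule has_derivative_const_minus_comp_nth[OF lam_diff])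
  note pd_a1 = pd_triple_product[OF c[of 2] c[of 3] f_diff[of 1], folded a1]
   and pd_a2 = pd_triple_product[OF c[of 1] c[of 3] f_diff[of 2], folded a2]
   and pd_a3 = pd_triple_product[OF c[of 1] c[of 2] f_diff[of 3], folded a3]
  show ?thesis
    unfolding wedge_d_def pd_a1 pd_a2 pd_a3
    by (simp add: a1 a2 a3 assms(3-5) axis_def) (simp add: algebra_simps)
qed

theorem mainTheorem4:
  fixes U :: "(real^3) set" and lam :: "3 \<Rightarrow> real \<Rightarrow> real" and f :: "real^3 \<Rightarrow> real"
  assumes "open U"
    and "\<And>i. smooth1 (lam i)"
    and "smooth_on U f"
  shows "(\<forall>l::real. \<forall>p\<in>U. wedge_d (alpha lam f l) p = 0) \<longleftrightarrow>
         (\<forall>p\<in>U. (lam 2 (p$2) - lam 3 (p$3)) * pd 1 f p * pd 3 (pd 2 f) p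
               + (lam 3 (p$3) - lam 1 (p$1)) * pd 2 f p * pd 3 (pd 1 f) p
               + (lam 1 (p$1) - lam 2 (p$2)) * pd 3 f p * pd 2 (pd 1 f) p = 0)"
    (is "_ \<longleftrightarrow> (\<forall>p\<in>U. ?E p = 0)")
proof -
  have "Ck1 1 (lam k)" for k
    using assms(2) unfolding smooth1_def by blast
  then have lam_diff: "lam k differentiable at x" for k x
    by (simp add: differentiable_on_eq_differentiable_at)
  have "Ck_on 2 U f"
    using assms(3) unfolding smooth_on_def by blast
  then have "f differentiable_on U" "pd i f differentiable_on U" "continuous_on U (pd j (pd i f))"
    for i j by (simp_all add: numeral_2_eq_2)
  then have wedge: "wedge_d (alpha lam f l) p =
      - ((l - lam 1 (p$1)) * (l - lam 2 (p$2)) * (l - lam 3 (p$3))) * ?E p" if "p \<in> U" for l p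
    using \<open>open U\<close> that
    by (intro wedge_d_alpha_factorization lam_diff pd_pd_commute)
      (auto simp: differentiable_on_eq_differentiable_at)
  show ?thesis
  proof (intro iffI ballI allI)
    fix p assume vanish: "\<forall>l. \<forall>p\<in>U. wedge_d (alpha lam f l) p = 0" and "p \<in> U"
    define l where "l = max (lam 1 (p$1)) (max (lam 2 (p$2)) (lam 3 (p$3))) + 1"
    have "(l - lam 1 (p$1)) * (l - lam 2 (p$2)) * (l - lam 3 (p$3)) \<noteq> 0"
      by (auto simp: l_def)
    moreover have "wedge_d (alpha lam f l) p = 0"
      using vanish \<open>p \<in> U\<close> by blast
    ultimately show "?E p = 0"
      using wedge[OF \<open>p \<in> U\<close>, of l] by simp
  qed (simp add: wedge)
qed

end
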